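(* Let $x,y$ be distinct odd primes and let $z$ be an odd positive integer divisible by $y$ and coprime to $x$. If $x$ is not balanced modulo $z$, then $x$ is not balanced modulo $yz$.
   Context: For positive integers $n,m$ with $\gcd(n,m)=1$, $n$ is said to be not balanced modulo $m$ iff there exists an odd Dirichlet character $\chi$ modulo $m$ (i.e. $\chi(-1)=-1$) such that $\chi(n)=1$ and $\sum_{0<k<m/2}\chi(k)\neq0$; otherwise $n$ is balanced modulo $m$. *)

theory Defs
  imports Complex_Main "HOL-Number_Theory.Number_Theory"
begin

definition dirichlet_char :: "nat \<Rightarrow> (nat \<Rightarrow> complex) \<Rightarrow> bool" where
  "dirichlet_char m \<chi> \<longleftrightarrow> m > 0 \<and> \<chi> 1 = 1 \<and>
     (\<forall>a b. \<chi> (a * b) = \<chi> a * \<chi> b) \<and>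
     (\<forall>a. \<chi> (a + m) = \<chi> a) \<and>
     (\<forall>a. \<chi> a \<noteq> 0 \<longleftrightarrow> coprime a m)"

text \<open>Odd character: chi(-1) = -1, i.e. chi(m-1) = -1 by periodicity.\<close>
definition odd_char :: "nat \<Rightarrow> (nat \<Rightarrow> complex) \<Rightarrow> bool" where
  "odd_char m \<chi> \<longleftrightarrow> \<chi> (m - 1) = -1"

definition not_balanced :: "nat \<Rightarrow> nat \<Rightarrow> bool" where
  "not_balanced n m \<longleftrightarrow> (\<exists>\<chi>. dirichlet_char m \<chi> \<and> odd_char m \<chi> \<and> \<chi> n = 1 \<and>
      (\<Sum>k\<in>{k. 0 < k \<and> 2 * k < m}. \<chi> k) \<noteq> 0)"

definition balanced :: "nat \<Rightarrow> nat \<Rightarrow> bool" where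
  "balanced n m \<longleftrightarrow> \<not> not_balanced n m"

end

theory Submission
  imports Defs
begin

text \<open>
  A character \<open>\<chi>\<close> modulo \<open>z\<close> is also a character modulo \<open>y z\<close> when \<open>y\<close> divides \<open>z\<close>: the
  units modulo \<open>y z\<close> and modulo \<open>z\<close> are the same residues, and \<open>\<chi>\<close> stays odd. For odd
  \<open>y\<close> and \<open>z\<close> the half range below \<open>y z / 2\<close> consists of the range below \<open>z / 2\<close>
  followed by \<open>(y - 1) / 2\<close> full periods of \<open>\<chi>\<close>, and an odd character sums to zero over
  a full period. So the half sums of \<open>\<chi>\<close> modulo \<open>z\<close> and modulo \<open>y z\<close> coincide, and the
  same \<open>\<chi>\<close> witnesses that \<open>x\<close> is not balanced modulo \<open>y z\<close>.
\<close>

lemma dirichlet_char_add_mult: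
  assumes "dirichlet_char m \<chi>"
  shows "\<chi> (a + j * m) = \<chi> a"
proof (induction j)
  case (Suc j)
  have "a + Suc j * m = (a + j * m) + m" by simp
  then show ?case using assms Suc unfolding dirichlet_char_def by metis
qed simp

lemma sum_lessThan_shift_periodic:
  fixes f :: "nat \<Rightarrow> 'a::cancel_comm_monoid_add"
  assumes "\<And>a. f (a + m) = f a"
  shows "(\<Sum>i<m. f (n + i)) = (\<Sum>i<m. f i)"
proof (induction n)
  case (Suc n)
  have "f n + (\<Sum>i<m. f (Suc n + i)) = (\<Sum>i<Suc m. f (n + i))"
    by (subst sum.lessThan_Suc_shift) simp
  also have "\<dots> = (\<Sum>i<m. f (n + i)) + f (n + m)"
    by simp
  also have "\<dots> = (\<Sum>i<m. f i) + f n"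
    using Suc.IH assms[of n] by simp
  finally show ?case by (metis add.commute add_left_cancel)
qed simp

lemma sum_lessThan_add:
  fixes f :: "nat \<Rightarrow> 'a::comm_monoid_add"
  shows "(\<Sum>k<n + m. f k) = (\<Sum>k<n. f k) + (\<Sum>i<m. f (n + i))"
  by (induction m) (simp_all add: add.assoc)

text \<open>The reflection \<open>k \<mapsto> m - k\<close> multiplies \<open>\<chi>\<close> by \<open>\<chi>(-1) = -1\<close>.\<close>

lemma odd_char_sum_period_eq_0:
  assumes dc: "dirichlet_char m \<chi>" and oc: "odd_char m \<chi>"
  shows "(\<Sum>k<m. \<chi> k) = 0"
proof -
  have reflect: "\<chi> (m - Suc k) = - \<chi> (Suc k)" if "k < m" for k
  proof -
    have "Suc k * (m - 1) = (m - Suc k) + k * m"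
      using that by (simp add: algebra_simps diff_mult_distrib2)
    then have "\<chi> (m - Suc k) = \<chi> (Suc k * (m - 1))"
      using dirichlet_char_add_mult[OF dc] by metis
    also have "\<dots> = \<chi> (Suc k) * \<chi> (m - 1)"
      using dc unfolding dirichlet_char_def by blast
    also have "\<dots> = - \<chi> (Suc k)"
      using oc by (simp add: odd_char_def)
    finally show ?thesis .
  qed
  have "(\<Sum>k<m. \<chi> k) = (\<Sum>k<m. \<chi> (m - Suc k))"
    by (rule sum.nat_diff_reindex[symmetric])
  also have "\<dots> = - (\<Sum>k<m. \<chi> (1 + k))"
    by (simp add: reflect sum_negf)
  also have "\<dots> = - (\<Sum>k<m. \<chi> k)"
    using sum_lessThan_shift_periodic[of \<chi> m 1] dc by (simp add: dirichlet_char_def)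
  finally show ?thesis by simp
qed

lemma odd_char_sum_lessThan_add_mult:
  assumes dc: "dirichlet_char m \<chi>" and oc: "odd_char m \<chi>"
  shows "(\<Sum>k<n + j * m. \<chi> k) = (\<Sum>k<n. \<chi> k)"
proof (induction j)
  case (Suc j)
  have periodic: "\<And>a. \<chi> (a + m) = \<chi> a" using dc by (simp add: dirichlet_char_def)
  have "n + Suc j * m = (n + j * m) + m" by simp
  then have "(\<Sum>k<n + Suc j * m. \<chi> k) = (\<Sum>k<n + j * m. \<chi> k) + (\<Sum>i<m. \<chi> (n + j * m + i))"
    using sum_lessThan_add by metis
  also have "(\<Sum>i<m. \<chi> (n + j * m + i)) = 0"
    using sum_lessThan_shift_periodic[of \<chi> m, OF periodic] odd_char_sum_period_eq_0[OF dc oc] by simp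
  finally show ?case using Suc by simp
qed simp

lemma odd_char_zero:
  assumes "dirichlet_char m \<chi>" and "odd_char m \<chi>"
  shows "\<chi> 0 = 0"
proof -
  have "m \<noteq> 1"
  proof
    assume "m = 1"
    then have "\<chi> 1 = \<chi> 0" and "\<chi> 1 = 1"
      using assms(1) unfolding dirichlet_char_def by (metis add_0, blast)
    moreover have "\<chi> 0 = -1" using assms(2) \<open>m = 1\<close> by (simp add: odd_char_def)
    ultimately show False by simp
  qed
  then have "\<not> coprime 0 m" by simp
  then show ?thesis using assms(1) unfolding dirichlet_char_def by blast
qed

lemma sum_half_range_odd:
  fixes f :: "nat \<Rightarrow> 'a::comm_monoid_add"
  assumes "f 0 = 0" and "odd m"
  shows "(\<Sum>k\<in>{k. 0 < k \<and> 2 * k < m}. f k) = (\<Sum>k<(m + 1) div 2. f k)"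
proof -
  have "{k. 0 < k \<and> 2 * k < m} = {..<(m + 1) div 2} - {0}"
    using assms(2) by (auto elim!: oddE)
  moreover have "0 \<in> {..<(m + 1) div 2}" using assms(2) by (auto elim!: oddE)
  ultimately show ?thesis
    using assms(1) sum.remove[of "{..<(m + 1) div 2}" 0 f] by simp
qed

lemma dirichlet_char_mult_modulus:
  assumes dc: "dirichlet_char z \<chi>" and "y > 0" and "y dvd z"
  shows "dirichlet_char (y * z) \<chi>"
proof -
  have "coprime a (y * z) \<longleftrightarrow> coprime a z" for a
    using coprime_divisors[OF dvd_refl \<open>y dvd z\<close>, of a] by (auto simp: coprime_mult_right_iff)
  then have "\<chi> a \<noteq> 0 \<longleftrightarrow> coprime a (y * z)" for a
    using dc by (simp add: dirichlet_char_def)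
  moreover have "\<chi> (a + y * z) = \<chi> a" for a
    using dirichlet_char_add_mult[OF dc, of a y] .
  moreover have "0 < y * z" using dc \<open>y > 0\<close> by (simp add: dirichlet_char_def)
  ultimately show ?thesis using dc by (simp add: dirichlet_char_def)
qed

lemma odd_char_mult_modulus:
  assumes "dirichlet_char z \<chi>" and "odd_char z \<chi>" and "y > 0"
  shows "odd_char (y * z) \<chi>"
proof -
  have "z > 0" using assms(1) by (simp add: dirichlet_char_def)
  then have "y * z - 1 = (z - 1) + (y - 1) * z"
    using \<open>y > 0\<close> by (simp add: algebra_simps diff_mult_distrib)
  then show ?thesis
    using assms dirichlet_char_add_mult[OF assms(1)] by (simp add: odd_char_def)
qed

theorem lemma4p7:
  fixes x y z :: nat
  assumes "prime x" "prime y" "odd x" "odd y" "x \<noteq> y"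
    and "odd z" "z > 0" "y dvd z" "coprime x z"
    and "not_balanced x z"
  shows "not_balanced x (y * z)"
proof -
  obtain \<chi> where dc: "dirichlet_char z \<chi>" and oc: "odd_char z \<chi>" and "\<chi> x = 1"
    and half_sum: "(\<Sum>k\<in>{k. 0 < k \<and> 2 * k < z}. \<chi> k) \<noteq> 0"
    using \<open>not_balanced x z\<close> unfolding not_balanced_def by blast
  have "y > 0" using \<open>odd y\<close> by (simp add: odd_pos)
  have \<chi>0: "\<chi> 0 = 0" using odd_char_zero[OF dc oc] .
  have half_range: "(y * z + 1) div 2 = (z + 1) div 2 + ((y - 1) div 2) * z"
    using \<open>odd y\<close> \<open>odd z\<close> by (auto elim!: oddE simp: algebra_simps)
  have "(\<Sum>k\<in>{k. 0 < k \<and> 2 * k < y * z}. \<chi> k) = (\<Sum>k<(y * z + 1) div 2. \<chi> k)"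
    using sum_half_range_odd[of \<chi>, OF \<chi>0] \<open>odd y\<close> \<open>odd z\<close> by simp
  also have "\<dots> = (\<Sum>k<(z + 1) div 2. \<chi> k)"
    unfolding half_range by (rule odd_char_sum_lessThan_add_mult[OF dc oc])
  also have "\<dots> = (\<Sum>k\<in>{k. 0 < k \<and> 2 * k < z}. \<chi> k)"
    using sum_half_range_odd[of \<chi>, OF \<chi>0 \<open>odd z\<close>] by simp
  finally have "(\<Sum>k\<in>{k. 0 < k \<and> 2 * k < y * z}. \<chi> k) \<noteq> 0"
    using half_sum by simp
  then show ?thesis
    unfolding not_balanced_def
    using dirichlet_char_mult_modulus[OF dc \<open>y > 0\<close> \<open>y dvd z\<close>]
      odd_char_mult_modulus[OF dc oc \<open>y > 0\<close>] \<open>\<chi> x = 1\<close> by blast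
qed

end
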